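(* Let $K=2^m$ with $m\ge2$ and $L\ge2$, and let $a(t)\in\mathbb{R}^{K-1}$ evolve according to $$\frac{da_i}{dt}=\frac{1}{D}b_ia_i^{\frac{2L}{L+1}},\qquad b_i=\sum_{j=1}^{K-1}\Psi_{ij}e^{-(\Psi a)_j},\quad D=1+\sum_{j=1}^{K-1}e^{-(\Psi a)_j}.$$ Suppose $a(0)$ has $a_i(0)=\gamma_0$ for odd $i$ and $a_i(0)=\delta_0$ for even $i$, with $\gamma_0,\delta_0>0$ and $\frac{\gamma_0}{\delta_0}>\big(\frac{K}{K-2}\big)^{\frac{L+1}{L-1}}$. Then for all $t\ge0$, $a(t)$ keeps this form ($a_i(t)=\gamma(t)$ for odd $i$, $a_i(t)=\delta(t)$ for even $i$), and the ratio $\gamma(t)/\delta(t)$ is strictly increasing in $t$; in particular $\gamma(t)/\delta(t)$ stays above $\big(\frac{K}{K-2}\big)^{\frac{L+1}{L-1}}$ for all $t\ge0$.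
   Context: Sylvester Hadamard matrices: $\Phi_1=(1)$, $\Phi_{2^m}=\begin{bmatrix}\Phi_{2^{m-1}}&\Phi_{2^{m-1}}\\ \Phi_{2^{m-1}}&-\Phi_{2^{m-1}}\end{bmatrix}$, $\Phi=\Phi_K$. $\Psi\in\mathbb{R}^{(K-1)\times(K-1)}$ is obtained from $1_K1_K^T-\Phi$ by deleting its first row and first column, indexed $1,\dots,K-1$. *)

theory Defs
  imports "HOL-Analysis.Analysis"
begin

(* Sylvester Hadamard matrix Phi_{2^m}, with 0-based indices i,j < 2^m:
   Phi_1 = (1),  Phi_{2^(m+1)} = [[Phi, Phi],[Phi, -Phi]] (blocks of size 2^m). *)
fun sylvester :: "nat \<Rightarrow> nat \<Rightarrow> nat \<Rightarrow> real" where
  "sylvester 0 i j = 1"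
| "sylvester (Suc m) i j =
     (if 2^m \<le> i \<and> 2^m \<le> j then -1 else 1) * sylvester m (i mod 2^m) (j mod 2^m)"

(* Psi = (1 1^T - Phi) with first row and column deleted; Psi is indexed by
   i,j in {1..K-1}, and Psi_{ij} = 1 - Phi(i,j) where Phi uses 0-based indices. *)
definition Psi :: "nat \<Rightarrow> nat \<Rightarrow> nat \<Rightarrow> real" where
  "Psi m i j = 1 - sylvester m i j"

definition Psi_mul :: "nat \<Rightarrow> (nat \<Rightarrow> real) \<Rightarrow> nat \<Rightarrow> real" where
  "Psi_mul m a j = (\<Sum>k=1..2^m - 1. Psi m j k * a k)"

definition b_coef :: "nat \<Rightarrow> (nat \<Rightarrow> real) \<Rightarrow> nat \<Rightarrow> real" where
  "b_coef m a i = (\<Sum>j=1..2^m - 1. Psi m i j * exp (- Psi_mul m a j))"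

definition D_coef :: "nat \<Rightarrow> (nat \<Rightarrow> real) \<Rightarrow> real" where
  "D_coef m a = 1 + (\<Sum>j=1..2^m - 1. exp (- Psi_mul m a j))"

end

theory Submission
  imports Defs
begin

text \<open>
  On vectors of the form \<open>\<gamma>, \<delta>, \<gamma>, \<delta>, \<dots>\<close> the Hadamard structure gives
  \<open>(\<Psi> a)\<^sub>1 = K \<gamma>\<close> and \<open>(\<Psi> a)\<^sub>j = K (\<gamma> + \<delta>) / 2\<close> for \<open>j > 1\<close>, so that
  \<open>b\<^sub>i = 2 exp (- K \<gamma>) + (K - 2) exp (- K (\<gamma> + \<delta>) / 2)\<close> for odd \<open>i\<close> and
  \<open>b\<^sub>i = K exp (- K (\<gamma> + \<delta>) / 2)\<close> for even \<open>i\<close>.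

  The solution keeps this form: its components increase, hence stay in a box \<open>(0, M]\<close> on
  \<open>[0, T]\<close>, where the right-hand side is Lipschitz and commutes with replacing a vector by its
  alternating part. So the squared distance \<open>u\<close> of \<open>a(t)\<close> to its alternating part satisfies
  \<open>u' \<le> \<lambda> u\<close> and \<open>u(0) = 0\<close>, and Gronwall's argument gives \<open>u = 0\<close>.

  With \<open>q = 2L/(L+1) - 1\<close>, the quotient rule shows that \<open>(\<gamma>/\<delta>)'\<close> has the sign of
  \<open>b\<^sub>1 \<gamma>\<^sup>q - b\<^sub>2 \<delta>\<^sup>q\<close>, which is positive as soon as \<open>(\<gamma>/\<delta>)\<^sup>q > K/(K - 2)\<close>.
  Hence the ratio can never come down to the threshold, and it increases strictly.
\<close>

section \<open>Sylvester--Hadamard matrices\<close>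

lemma sylvester_first_column: "sylvester m i 0 = 1"
  by (induction m arbitrary: i) auto

lemma sylvester_eq_pm1: "sylvester m i j = 1 \<or> sylvester m i j = -1"
  by (induction m arbitrary: i j) auto

lemma sylvester_Suc_parity:
  assumes "i < 2^Suc m" "j < 2^Suc m"
  shows "sylvester (Suc m) i j = (if odd i \<and> odd j then -1 else 1) * sylvester m (i div 2) (j div 2)"
  using assms
proof (induction m arbitrary: i j)
  case 0
  then show ?case by (auto simp: less_2_cases_iff)
next
  case (Suc m)
  have high_bit: "(2 * 2^m \<le> k) = (2^m \<le> k div 2)" for k :: nat
    by auto
  have mod_div: "(k mod (2 * 2^m)) div 2 = (k div 2) mod 2^m" for k :: nat
    by (simp add: mod_mult2_eq)
  have odd_mod: "odd (k mod (2 * 2^m)) = odd k" for k :: nat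
    by (simp add: odd_iff_mod_2_eq_one mod_mod_cancel)
  show ?case
    by (subst sylvester.simps, subst Suc.IH) (auto simp: high_bit mod_div odd_mod)
qed

lemma sum_lessThan_double:
  fixes f :: "nat \<Rightarrow> 'a::comm_monoid_add"
  shows "(\<Sum>k<2*n. f k) = (\<Sum>k<n. f (2*k)) + (\<Sum>k<n. f (2*k+1))"
  by (induction n) (simp_all add: sum.distrib ac_simps)

lemma sylvester_Suc_even_column:
  "j < 2^Suc m \<Longrightarrow> k < 2^m \<Longrightarrow> sylvester (Suc m) j (2*k) = sylvester m (j div 2) k"
  by (subst sylvester_Suc_parity) auto

lemma sylvester_Suc_odd_column:
  "j < 2^Suc m \<Longrightarrow> k < 2^m \<Longrightarrow>
   sylvester (Suc m) j (Suc (2*k)) = (if odd j then -1 else 1) * sylvester m (j div 2) k"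
  by (subst sylvester_Suc_parity) auto

lemma sylvester_row_sum:
  "j < 2^m \<Longrightarrow> (\<Sum>k<2^m. sylvester m j k) = (if j = 0 then 2^m else 0)"
proof (induction m arbitrary: j)
  case 0
  then show ?case by simp
next
  case (Suc m)
  have "(\<Sum>k<2^Suc m. sylvester (Suc m) j k)
      = (1 + (if odd j then -1 else 1)) * (\<Sum>k<2^m. sylvester m (j div 2) k)"
    using Suc.prems
    by (simp add: sum_lessThan_double sylvester_Suc_even_column sylvester_Suc_odd_column
        sum_distrib_left distrib_right sum_negf del: sylvester.simps)
  then show ?case
    using Suc.IH[of "j div 2"] Suc.prems by (auto elim!: evenE)
qed

text \<open>The alternating part of \<open>x\<close> is \<open>x \<circ> parity_rep\<close>; the vectors of the form
  \<open>\<gamma>, \<delta>, \<gamma>, \<delta>, \<dots>\<close> are those that agree with their alternating part.\<close>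

definition parity_rep :: "nat \<Rightarrow> nat" where
  "parity_rep k = (if odd k then 1 else 2)"

lemma parity_rep_mem: "i \<in> {1..2^m - 1} \<Longrightarrow> parity_rep i \<in> {1..2^m - 1}"
  by (auto simp: parity_rep_def elim!: evenE)

lemma parity_rep_idem [simp]: "parity_rep (parity_rep k) = parity_rep k"
  by (simp add: parity_rep_def)

lemma sum_atLeast1_eq_lessThan:
  fixes f :: "nat \<Rightarrow> 'a::comm_monoid_add"
  assumes "f 0 = 0"
  shows "(\<Sum>k=1..2^m - 1. f k) = (\<Sum>k<2^m. f k)"
proof -
  have "{..<2^m} = insert 0 {1..2^m - 1::nat}"
    by auto
  then show ?thesis using assms by simp
qed

lemma Psi_first_column [simp]: "Psi m i 0 = 0"
  by (simp add: Psi_def sylvester_first_column)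

lemma Psi_bounds: "0 \<le> Psi m i j" "Psi m i j \<le> 2"
  using sylvester_eq_pm1[of m i j] by (auto simp: Psi_def)

lemma Psi_row_sum:
  assumes "i \<in> {1..2^m - 1}"
  shows "(\<Sum>j=1..2^m - 1. Psi m i j) = 2^m"
proof -
  have "(\<Sum>j=1..2^m - 1. Psi m i j) = (\<Sum>j<2^m. 1 - sylvester m i j)"
    unfolding Psi_def by (rule sum_atLeast1_eq_lessThan) (simp add: sylvester_first_column)
  then show ?thesis
    using assms sylvester_row_sum[of i m] by (auto simp: sum_subtractf)
qed

lemma Psi_second_column:
  "i < 2^Suc m \<Longrightarrow> Psi (Suc m) i 1 = (if odd i then 2 else 0)"
  using sylvester_Suc_odd_column[of i m 0] by (simp add: Psi_def sylvester_first_column del: sylvester.simps)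

lemma Psi_mul_alternating:
  assumes j: "j \<in> {1..2^Suc m - 1}"
    and x: "\<forall>k\<in>{1..2^Suc m - 1}. x k = x (parity_rep k)"
  shows "Psi_mul (Suc m) x j = (if j = 1 then 2^Suc m * x 1 else 2^m * (x 1 + x 2))"
proof -
  define s :: "nat \<Rightarrow> real" where "s = (\<lambda>k. if odd k then x 1 else x 2)"
  have row_sum: "(\<Sum>k<2^m. sylvester m (j div 2) k) = (if j = 1 then 2^m else 0)"
    using j by (subst sylvester_row_sum) auto
  have "Psi_mul (Suc m) x j = (\<Sum>k=1..2^Suc m - 1. Psi (Suc m) j k * s k)"
  proof -
    have "x k = s k" if "k \<in> {1..2^Suc m - 1}" for k
      by (subst x[rule_format, OF that]) (simp add: s_def parity_rep_def)
    then show ?thesis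
      unfolding Psi_mul_def by (intro sum.cong) simp_all
  qed
  also have "\<dots> = (\<Sum>k<2^m. Psi (Suc m) j (2*k) * x 2) + (\<Sum>k<2^m. Psi (Suc m) j (2*k+1) * x 1)"
  proof -
    have "(\<Sum>k=1..2^Suc m - 1. Psi (Suc m) j k * s k) = (\<Sum>k<2*2^m. Psi (Suc m) j k * s k)"
      by (subst sum_atLeast1_eq_lessThan) simp_all
    then show ?thesis
      by (simp only: sum_lessThan_double) (simp add: s_def)
  qed
  also have "\<dots> = (\<Sum>k<2^m. x 2 * (1 - sylvester m (j div 2) k))
      + (\<Sum>k<2^m. x 1 * (1 - (if odd j then -1 else 1) * sylvester m (j div 2) k))"
    using j by (intro arg_cong2[where f = "(+)"] sum.cong)
      (auto simp: Psi_def sylvester_Suc_even_column sylvester_Suc_odd_column simp del: sylvester.simps)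
  also have "\<dots> = x 2 * (2^m - (\<Sum>k<2^m. sylvester m (j div 2) k))
      + x 1 * (2^m - (if odd j then -1 else 1) * (\<Sum>k<2^m. sylvester m (j div 2) k))"
    by (simp only: sum_distrib_left[symmetric] sum_subtractf) simp
  finally show ?thesis
    unfolding row_sum by (cases "j = 1") (simp_all add: algebra_simps)
qed

lemma b_coef_alternating:
  assumes i: "i \<in> {1..2^Suc m - 1}"
    and x: "\<forall>k\<in>{1..2^Suc m - 1}. x k = x (parity_rep k)"
  shows "b_coef (Suc m) x i =
    (if odd i then 2 * exp (- (2^Suc m * x 1)) + (2^Suc m - 2) * exp (- (2^m * (x 1 + x 2)))
     else 2^Suc m * exp (- (2^m * (x 1 + x 2))))"
proof -
  define E where "E = exp (- (2^m * (x 1 + x 2)))"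
  define E1 where "E1 = exp (- (2^Suc m * x 1))"
  have one: "1 \<in> {1..2^Suc m - 1::nat}"
    using i by auto
  have "b_coef (Suc m) x i = (\<Sum>j=1..2^Suc m - 1. Psi (Suc m) i j * (if j = 1 then E1 else E))"
    unfolding b_coef_def by (intro sum.cong) (simp_all add: Psi_mul_alternating[OF _ x] E_def E1_def)
  also have "\<dots> = E * (\<Sum>j=1..2^Suc m - 1. Psi (Suc m) i j)
      + (\<Sum>j=1..2^Suc m - 1. if j = (1::nat) then Psi (Suc m) i 1 * (E1 - E) else 0)"
    by (subst sum_distrib_left, subst sum.distrib[symmetric], intro sum.cong) (auto simp: algebra_simps)
  also have "\<dots> = 2^Suc m * E + Psi (Suc m) i 1 * (E1 - E)"
    using one Psi_row_sum[OF i] by simp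
  also have "Psi (Suc m) i 1 = (if odd i then 2 else 0)"
    using i by (intro Psi_second_column) auto
  finally show ?thesis
    unfolding E_def[symmetric] E1_def[symmetric] by (cases "odd i") (simp_all add: algebra_simps)
qed

lemma b_coef_parity_rep:
  assumes "i \<in> {1..2^Suc m - 1}"
    and "\<forall>k\<in>{1..2^Suc m - 1}. x k = x (parity_rep k)"
  shows "b_coef (Suc m) x (parity_rep i) = b_coef (Suc m) x i"
  using assms(1) parity_rep_mem[OF assms(1)]
  by (simp add: b_coef_alternating[OF _ assms(2)]) (simp add: parity_rep_def)

section \<open>Lipschitz estimates for the right-hand side\<close>

lemma exp_minus_lipschitz:
  fixes x y :: real
  assumes "0 \<le> x" "0 \<le> y"
  shows "\<bar>exp (- x) - exp (- y)\<bar> \<le> \<bar>x - y\<bar>"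
proof -
  have "norm (exp (- x) - exp (- y)) \<le> 1 * norm (x - y)"
  proof (rule field_differentiable_bound[of "{0..}"])
    show "((\<lambda>x. exp (- x)) has_real_derivative - exp (- z)) (at z within {0..})" for z
      by (auto intro!: derivative_eq_intros)
  qed (use assms in auto)
  then show ?thesis
    by simp
qed

lemma powr_lipschitz:
  fixes x y M p :: real
  assumes "1 \<le> p" "x \<in> {0<..M}" "y \<in> {0<..M}"
  shows "\<bar>x powr p - y powr p\<bar> \<le> p * M powr (p - 1) * \<bar>x - y\<bar>"
proof -
  have "norm (x powr p - y powr p) \<le> p * M powr (p - 1) * norm (x - y)"
  proof (rule field_differentiable_bound[of "{0<..M}"])
    show "((\<lambda>x. x powr p) has_real_derivative p * z powr (p - 1)) (at z within {0<..M})"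
      if "z \<in> {0<..M}" for z
      using that by (intro has_field_derivative_at_within[OF has_real_derivative_powr]) auto
    show "norm (p * z powr (p - 1)) \<le> p * M powr (p - 1)" if "z \<in> {0<..M}" for z
      using that assms(1) by (auto simp: abs_mult intro!: mult_left_mono powr_mono2)
  qed (use assms in auto)
  then show ?thesis
    by simp
qed

lemma Psi_mul_nonneg: "\<forall>k\<in>{1..2^m - 1}. 0 \<le> x k \<Longrightarrow> 0 \<le> Psi_mul m x j"
  unfolding Psi_mul_def by (intro sum_nonneg) (simp add: Psi_bounds)

lemma b_coef_nonneg: "0 \<le> b_coef m x i"
  unfolding b_coef_def by (intro sum_nonneg) (simp add: Psi_bounds)

lemma b_coef_le:
  assumes "\<forall>k\<in>{1..2^m - 1}. 0 \<le> x k"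
  shows "b_coef m x i \<le> 2 * (2^m - 1)"
proof -
  have "b_coef m x i \<le> (\<Sum>j=1..2^m - 1::nat. 2 * 1)"
    unfolding b_coef_def
    by (intro sum_mono mult_mono) (use Psi_bounds Psi_mul_nonneg[OF assms] in auto)
  then show ?thesis
    by (simp add: of_nat_diff)
qed

lemma D_coef_ge_1: "1 \<le> D_coef m x"
  unfolding D_coef_def by (simp add: sum_nonneg)

lemma b_coef_lipschitz:
  assumes "\<forall>k\<in>{1..2^m - 1}. 0 \<le> x k" "\<forall>k\<in>{1..2^m - 1}. 0 \<le> y k"
  shows "\<bar>b_coef m x i - b_coef m y i\<bar> \<le> 4 * (2^m - 1) * (\<Sum>k=1..2^m - 1. \<bar>x k - y k\<bar>)"
proof -
  define S where "S = (\<Sum>k=1..2^m - 1. \<bar>x k - y k\<bar>)"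
  have Psi_mul_diff: "\<bar>Psi_mul m x j - Psi_mul m y j\<bar> \<le> 2 * S" for j
  proof -
    have "\<bar>Psi_mul m x j - Psi_mul m y j\<bar> \<le> (\<Sum>k=1..2^m - 1. \<bar>Psi m j k * (x k - y k)\<bar>)"
      unfolding Psi_mul_def sum_subtractf[symmetric] right_diff_distrib[symmetric] by (rule sum_abs)
    also have "\<dots> \<le> (\<Sum>k=1..2^m - 1. 2 * \<bar>x k - y k\<bar>)"
      by (intro sum_mono) (simp add: abs_mult Psi_bounds mult_right_mono)
    finally show ?thesis
      by (simp add: S_def sum_distrib_left)
  qed
  have "\<bar>b_coef m x i - b_coef m y i\<bar>
      \<le> (\<Sum>j=1..2^m - 1. \<bar>Psi m i j * (exp (- Psi_mul m x j) - exp (- Psi_mul m y j))\<bar>)"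
    unfolding b_coef_def sum_subtractf[symmetric] right_diff_distrib[symmetric] by (rule sum_abs)
  also have "\<dots> \<le> (\<Sum>j=1..2^m - 1::nat. 2 * (2 * S))"
  proof (intro sum_mono)
    fix j
    have "\<bar>exp (- Psi_mul m x j) - exp (- Psi_mul m y j)\<bar> \<le> 2 * S"
      using exp_minus_lipschitz Psi_mul_nonneg assms Psi_mul_diff order_trans by metis
    then show "\<bar>Psi m i j * (exp (- Psi_mul m x j) - exp (- Psi_mul m y j))\<bar> \<le> 2 * (2 * S)"
      unfolding abs_mult using Psi_bounds[of m i j] by (intro mult_mono) auto
  qed
  finally show ?thesis
    by (simp add: S_def of_nat_diff algebra_simps)
qed

definition flow_rhs :: "nat \<Rightarrow> real \<Rightarrow> (nat \<Rightarrow> real) \<Rightarrow> nat \<Rightarrow> real" where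
  "flow_rhs m p x i = 1 / D_coef m x * b_coef m x i * x i powr p"

lemma flow_rhs_nonneg: "0 \<le> flow_rhs m p x i"
  unfolding flow_rhs_def using D_coef_ge_1[of m x] b_coef_nonneg[of m x i] by simp

lemma b_coef_parity_deviation:
  assumes x: "\<forall>k\<in>{1..2^Suc m - 1}. 0 \<le> x k" and i: "i \<in> {1..2^Suc m - 1}"
  shows "\<bar>b_coef (Suc m) x i - b_coef (Suc m) x (parity_rep i)\<bar>
    \<le> 8 * (2^Suc m - 1) * (\<Sum>k=1..2^Suc m - 1. \<bar>x k - x (parity_rep k)\<bar>)"
proof -
  define s where "s = (\<lambda>k. x (parity_rep k))"
  have s: "\<forall>k\<in>{1..2^Suc m - 1}. 0 \<le> s k"
    using x parity_rep_mem unfolding s_def by blast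
  \<comment> \<open>at the alternating vector \<open>s\<close> both coefficients coincide\<close>
  have "b_coef (Suc m) s (parity_rep i) = b_coef (Suc m) s i"
    using i by (intro b_coef_parity_rep) (simp_all add: s_def)
  then show ?thesis
    using b_coef_lipschitz[OF x s, of i] b_coef_lipschitz[OF x s, of "parity_rep i"]
    unfolding s_def by arith
qed

lemma flow_rhs_parity_deviation:
  fixes m :: nat and M p :: real
  defines "n \<equiv> 2^Suc m - 1 :: real"
  assumes p: "1 \<le> p"
    and x: "\<forall>k\<in>{1..2^Suc m - 1}. x k \<in> {0<..M}"
    and i: "i \<in> {1..2^Suc m - 1}"
  shows "\<bar>flow_rhs (Suc m) p x i - flow_rhs (Suc m) p x (parity_rep i)\<bar>
    \<le> (8 * n * M powr p + 2 * n * p * M powr (p - 1))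
      * (\<Sum>k=1..2^Suc m - 1. \<bar>x k - x (parity_rep k)\<bar>)"
proof -
  define S where "S = (\<Sum>k=1..2^Suc m - 1. \<bar>x k - x (parity_rep k)\<bar>)"
  define Bi Br where "Bi = b_coef (Suc m) x i" and "Br = b_coef (Suc m) x (parity_rep i)"
  define Xi Xr where "Xi = x i powr p" and "Xr = x (parity_rep i) powr p"
  have x_nonneg: "\<forall>k\<in>{1..2^Suc m - 1}. 0 \<le> x k"
    using x by fastforce
  have x_ir: "x i \<in> {0<..M}" "x (parity_rep i) \<in> {0<..M}"
    using x i parity_rep_mem[OF i] by blast+
  have "0 \<le> Xi" "Xi \<le> M powr p"
    using x_ir p unfolding Xi_def by (auto intro!: powr_mono2)
  moreover have "\<bar>Bi - Br\<bar> \<le> 8 * n * S"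
    using b_coef_parity_deviation[OF x_nonneg i] by (simp add: Bi_def Br_def S_def n_def)
  moreover have "\<bar>Br\<bar> \<le> 2 * n"
    using b_coef_le[OF x_nonneg] b_coef_nonneg by (simp add: Br_def n_def)
  moreover have "\<bar>x i - x (parity_rep i)\<bar> \<le> S"
    unfolding S_def using i by (rule member_le_sum) simp_all
  then have "\<bar>Xi - Xr\<bar> \<le> p * M powr (p - 1) * S"
    unfolding Xi_def Xr_def using p
    by (intro order_trans[OF powr_lipschitz[OF p x_ir]] mult_left_mono) simp_all
  moreover have "0 \<le> n" "0 \<le> S"
    using one_le_power[of "2::real" "Suc m"] by (simp_all add: n_def S_def sum_nonneg)
  ultimately have "\<bar>(Bi - Br) * Xi + Br * (Xi - Xr)\<bar> \<le> 8 * n * S * M powr p + 2 * n * (p * M powr (p - 1) * S)"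
    by (intro order_trans[OF abs_triangle_ineq] add_mono) (auto simp: abs_mult intro!: mult_mono)
  moreover have "\<bar>flow_rhs (Suc m) p x i - flow_rhs (Suc m) p x (parity_rep i)\<bar>
      = \<bar>(Bi - Br) * Xi + Br * (Xi - Xr)\<bar> / D_coef (Suc m) x"
    using D_coef_ge_1[of "Suc m" x]
    by (simp add: flow_rhs_def Bi_def Br_def Xi_def Xr_def abs_div algebra_simps flip: diff_divide_distrib)
  moreover have "\<bar>(Bi - Br) * Xi + Br * (Xi - Xr)\<bar> / D_coef (Suc m) x \<le> \<bar>(Bi - Br) * Xi + Br * (Xi - Xr)\<bar>"
    using D_coef_ge_1[of "Suc m" x] by (simp add: divide_le_eq mult_le_cancel_left1)
  ultimately show ?thesis
    by (simp add: S_def algebra_simps)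
qed

section \<open>Two comparison arguments for real functions\<close>

lemma DERIV_le_linear_imp_nonpos:
  fixes u u' :: "real \<Rightarrow> real" and lam a b :: real
  assumes "a \<le> b" "continuous_on {a..b} u"
    and deriv: "\<And>t. a < t \<Longrightarrow> t < b \<Longrightarrow> (u has_real_derivative u' t) (at t)"
    and growth: "\<And>t. a < t \<Longrightarrow> t < b \<Longrightarrow> u' t \<le> lam * u t"
    and "u a \<le> 0"
  shows "u b \<le> 0"
proof -
  \<comment> \<open>the damped function \<open>u t * exp (- lam * t)\<close> is non-increasing\<close>
  define w where "w t = u t * exp (- (lam * t))" for t
  have "w b \<le> w a"
  proof (rule DERIV_nonpos_imp_decreasing_open[OF \<open>a \<le> b\<close>])
    show "continuous_on {a..b} w"
      unfolding w_def by (intro continuous_intros \<open>continuous_on {a..b} u\<close>)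
    fix t assume t: "a < t" "t < b"
    have "(w has_real_derivative (u' t - lam * u t) * exp (- (lam * t))) (at t)"
      unfolding w_def by (auto intro!: derivative_eq_intros deriv[OF t] simp: algebra_simps)
    moreover have "(u' t - lam * u t) * exp (- (lam * t)) \<le> 0"
      using growth[OF t] by (simp add: mult_nonpos_nonneg)
    ultimately show "\<exists>y. (w has_real_derivative y) (at t) \<and> y \<le> 0"
      by blast
  qed
  also have "w a \<le> 0"
    using \<open>u a \<le> 0\<close> by (simp add: w_def mult_nonpos_nonneg)
  finally show ?thesis
    unfolding w_def by (metis exp_gt_zero mult_le_0_iff not_le)
qed

lemma sum_mult_le_card_sum_squares:
  fixes d e :: "'a \<Rightarrow> real"
  assumes "0 \<le> C"
    and e: "\<And>i. i \<in> I \<Longrightarrow> \<bar>e i\<bar> \<le> C * (\<Sum>k\<in>I. \<bar>d k\<bar>)"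
  shows "(\<Sum>i\<in>I. d i * e i) \<le> C * card I * (\<Sum>i\<in>I. (d i)\<^sup>2)"
proof -
  define S where "S = (\<Sum>k\<in>I. \<bar>d k\<bar>)"
  have "(\<Sum>i\<in>I. d i * e i) \<le> (\<Sum>i\<in>I. \<bar>d i\<bar> * (C * S))"
  proof (rule sum_mono)
    fix i assume "i \<in> I"
    have "d i * e i \<le> \<bar>d i\<bar> * \<bar>e i\<bar>"
      by (simp flip: abs_mult)
    also have "\<dots> \<le> \<bar>d i\<bar> * (C * S)"
      using e[OF \<open>i \<in> I\<close>] by (simp add: S_def mult_left_mono)
    finally show "d i * e i \<le> \<bar>d i\<bar> * (C * S)" .
  qed
  also have "\<dots> = C * S\<^sup>2"
    by (simp add: S_def power2_eq_square sum_distrib_left sum_distrib_right ac_simps)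
  also have "\<dots> \<le> C * (card I * (\<Sum>i\<in>I. (d i)\<^sup>2))"
    using sum_squared_le_sum_of_squares[of "\<lambda>k. \<bar>d k\<bar>" I] \<open>0 \<le> C\<close>
    by (intro mult_left_mono) (simp_all add: S_def mult.commute)
  finally show ?thesis
    by (simp add: ac_simps)
qed

lemma strict_mono_on_if_DERIV_pos_above:
  fixes r :: "real \<Rightarrow> real" and c :: real
  assumes cont: "continuous_on {0..} r" and "c < r 0"
    and deriv: "\<And>t. 0 < t \<Longrightarrow> c < r t \<Longrightarrow> \<exists>y. (r has_real_derivative y) (at t) \<and> 0 < y"
  shows "\<forall>t\<ge>0. c < r t" and "strict_mono_on {0..} r"
proof -
  have incr: "r s < r t" if "0 \<le> s" "s < t" "\<And>x. s < x \<Longrightarrow> x < t \<Longrightarrow> c < r x" for s t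
  proof (rule DERIV_pos_imp_increasing_open[OF \<open>s < t\<close>])
    fix x assume "s < x" "x < t"
    then show "\<exists>y. (r has_real_derivative y) (at x) \<and> 0 < y"
      using deriv[of x] that by simp
  next
    show "continuous_on {s..t} r"
      using that by (intro continuous_on_subset[OF cont]) auto
  qed
  show above: "\<forall>t\<ge>0. c < r t"
  proof (rule ccontr)
    assume "\<not> (\<forall>t\<ge>0. c < r t)"
    then obtain t where t: "0 \<le> t" "r t \<le> c"
      by auto
    \<comment> \<open>the first time at which \<open>r\<close> drops to \<open>c\<close>\<close>
    define S where "S = {0..t} \<inter> r -` {..c}"
    have "closed S"
      unfolding S_def using cont
      by (intro continuous_closed_preimage) (auto intro: continuous_on_subset)
    moreover have "t \<in> S" "bdd_below S"
      using t by (auto simp: S_def)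
    ultimately have first: "Inf S \<in> S"
      by (intro closed_contains_Inf) auto
    have "c < r x" if "0 \<le> x" "x < Inf S" for x
      using cInf_lower[OF _ \<open>bdd_below S\<close>, of x] that first by (force simp: S_def)
    moreover have "0 < Inf S"
      using first \<open>c < r 0\<close> by (auto simp: S_def less_eq_real_def)
    ultimately have "r 0 < r (Inf S)"
      by (intro incr) auto
    then show False
      using first \<open>c < r 0\<close> by (simp add: S_def)
  qed
  show "strict_mono_on {0..} r"
    using above by (intro strict_mono_onI incr) auto
qed

section \<open>The flow\<close>

lemma ratio_threshold_ineq:
  fixes K q g d E E1 :: real
  assumes "2 < K" "0 < q" "0 < g" "0 < d" "0 < E" "0 \<le> E1"
    and ratio: "(K / (K - 2)) powr (1 / q) < g / d"
  shows "K * E * d powr q < (2 * E1 + (K - 2) * E) * g powr q"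
proof -
  have "K / (K - 2) = ((K / (K - 2)) powr (1 / q)) powr q"
    using assms(1,2) by (simp add: powr_powr)
  also have "\<dots> < (g / d) powr q"
    using ratio assms(2) by (intro powr_less_mono2) auto
  finally have "K * d powr q < (K - 2) * g powr q"
    using assms(1,3,4) by (simp add: powr_divide field_simps)
  then have "K * E * d powr q < (K - 2) * E * g powr q"
    using \<open>0 < E\<close> by (simp add: mult.commute mult.left_commute)
  also have "\<dots> \<le> (2 * E1 + (K - 2) * E) * g powr q"
    using \<open>0 \<le> E1\<close> by (intro mult_right_mono) auto
  finally show ?thesis .
qed

locale hadamard_flow =
  fixes m :: nat and p :: real and a :: "real \<Rightarrow> nat \<Rightarrow> real"
  assumes ode: "\<And>t i. 0 \<le> t \<Longrightarrow> i \<in> {1..2^m - 1} \<Longrightarrow>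
      ((\<lambda>s. a s i) has_real_derivative flow_rhs m p (a t) i) (at t within {0..})"
    and initial_pos: "\<And>i. i \<in> {1..2^m - 1} \<Longrightarrow> 0 < a 0 i"
begin

lemma has_real_derivative_at:
  assumes "0 < t" "i \<in> {1..2^m - 1}"
  shows "((\<lambda>s. a s i) has_real_derivative flow_rhs m p (a t) i) (at t)"
proof -
  have "((\<lambda>s. a s i) has_real_derivative flow_rhs m p (a t) i) (at t within {0<..})"
    using assms by (intro DERIV_subset[OF ode]) auto
  then show ?thesis
    using assms(1) at_within_open[of t "{0<..}"] by simp
qed

lemma component_continuous: "i \<in> {1..2^m - 1} \<Longrightarrow> continuous_on {0..} (\<lambda>s. a s i)"
  using ode by (intro DERIV_continuous_on) auto

lemma component_mono:
  assumes "i \<in> {1..2^m - 1}" "0 \<le> s" "s \<le> t"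
  shows "a s i \<le> a t i"
proof (rule DERIV_nonneg_imp_increasing_open[OF \<open>s \<le> t\<close>])
  fix x assume "s < x" "x < t"
  then show "\<exists>y. ((\<lambda>s. a s i) has_real_derivative y) (at x) \<and> 0 \<le> y"
    using has_real_derivative_at[of x i] flow_rhs_nonneg assms by auto
next
  show "continuous_on {s..t} (\<lambda>s. a s i)"
    using assms by (intro continuous_on_subset[OF component_continuous]) auto
qed

lemma component_pos: "0 \<le> t \<Longrightarrow> i \<in> {1..2^m - 1} \<Longrightarrow> 0 < a t i"
  using initial_pos[of i] component_mono[of i 0 t] by simp

lemma alternating_preserved:
  assumes p: "1 \<le> p"
    and initial_alternating: "\<forall>k\<in>{1..2^m - 1}. a 0 k = a 0 (parity_rep k)"
    and "0 \<le> T" and i: "i \<in> {1..2^m - 1}"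
  shows "a T i = a T (parity_rep i)"
proof -
  obtain m' where m: "m = Suc m'"
    using i by (cases m) auto
  let ?I = "{1..2^m - 1::nat}"
  define M where "M = (\<Sum>k\<in>?I. a T k)"
  define n :: real where "n = 2^m - 1"
  define C where "C = 8 * n * M powr p + 2 * n * p * M powr (p - 1)"
  define dev where "dev t k = a t k - a t (parity_rep k)" for t k
  define u where "u t = (\<Sum>k\<in>?I. (dev t k)\<^sup>2)" for t
  have box: "a t k \<in> {0<..M}" if "0 \<le> t" "t \<le> T" "k \<in> ?I" for t k
  proof -
    have "a t k \<le> a T k"
      using component_mono that by blast
    also have "a T k \<le> M"
      unfolding M_def using that component_pos \<open>0 \<le> T\<close> by (intro member_le_sum) (auto intro: less_imp_le)
    finally show ?thesis
      using component_pos that by auto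
  qed
  have "0 \<le> C"
    using p by (simp add: C_def n_def)
  have "u T \<le> 0"
  proof (rule DERIV_le_linear_imp_nonpos[OF \<open>0 \<le> T\<close>])
    show "continuous_on {0..T} u"
      unfolding u_def dev_def using parity_rep_mem
      by (intro continuous_intros continuous_on_subset[OF component_continuous]) auto
    fix t assume t: "0 < t" "t < T"
    define e where "e k = 2 * (flow_rhs m p (a t) k - flow_rhs m p (a t) (parity_rep k))" for k
    show "(u has_real_derivative (\<Sum>k\<in>?I. dev t k * e k)) (at t)"
      unfolding u_def dev_def e_def using t parity_rep_mem
      by (intro DERIV_sum) (auto intro!: derivative_eq_intros has_real_derivative_at simp: algebra_simps)
    have "\<bar>e k\<bar> \<le> 2 * C * (\<Sum>k\<in>?I. \<bar>dev t k\<bar>)" if "k \<in> ?I" for k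
    proof -
      have "\<bar>flow_rhs m p (a t) k - flow_rhs m p (a t) (parity_rep k)\<bar> \<le> C * (\<Sum>k\<in>?I. \<bar>dev t k\<bar>)"
        using flow_rhs_parity_deviation[OF p, of m' "a t" M k] box t that
        by (simp add: dev_def C_def n_def m)
      then show ?thesis
        unfolding e_def abs_mult by simp
    qed
    then show "(\<Sum>k\<in>?I. dev t k * e k) \<le> 2 * C * card ?I * u t"
      unfolding u_def using \<open>0 \<le> C\<close> by (intro sum_mult_le_card_sum_squares) auto
  next
    show "u 0 \<le> 0"
      using initial_alternating by (simp add: u_def dev_def)
  qed
  moreover have "(dev T i)\<^sup>2 \<le> u T"
    unfolding u_def using i by (intro member_le_sum) auto
  ultimately have "(dev T i)\<^sup>2 \<le> 0"
    by linarith
  then show ?thesis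
    by (simp add: dev_def)
qed

lemma ratio_has_pos_derivative:
  assumes m: "2 \<le> m" and p: "1 < p" and t: "0 < t"
    and alt: "\<forall>k\<in>{1..2^m - 1}. a t k = a t (parity_rep k)"
    and above: "(2^m / (2^m - 2)) powr (1 / (p - 1)) < a t 1 / a t 2"
  shows "\<exists>y. ((\<lambda>s. a s 1 / a s 2) has_real_derivative y) (at t) \<and> 0 < y"
proof -
  obtain m' where m': "m = Suc m'"
    using m by (cases m) auto
  define K :: real where "K = 2^m"
  define q where "q = p - 1"
  define g d where "g = a t 1" and "d = a t 2"
  define E E1 where "E = exp (- (2^m' * (g + d)))" and "E1 = exp (- (2^m * g))"
  define D where "D = D_coef m (a t)"
  have "(4::nat) \<le> 2^m"
    using power_increasing[OF m, of "2::nat"] by simp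
  then have I12: "1 \<in> {1..2^m - 1::nat}" "2 \<in> {1..2^m - 1::nat}"
    by auto
  have "2 < K"
    using power_strict_increasing[of 1 m "2::real"] m by (simp add: K_def)
  have gd: "0 < g" "0 < d"
    using component_pos t I12 by (auto simp: g_def d_def)
  have "0 < D"
    using D_coef_ge_1[of m "a t"] by (simp add: D_def)
  have b: "b_coef m (a t) 1 = 2 * E1 + (K - 2) * E" "b_coef m (a t) 2 = K * E"
    using b_coef_alternating[of _ m' "a t"] I12 alt
    by (simp_all add: m' K_def E_def E1_def g_def d_def)
  have powr_p: "x powr p = x * x powr q" if "0 < x" for x :: real
    using powr_add[of x 1 q] that by (simp add: q_def)
  define N where "N = flow_rhs m p (a t) 1 * d - g * flow_rhs m p (a t) 2"
  have "N = g * d / D * ((2 * E1 + (K - 2) * E) * g powr q - K * E * d powr q)"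
    using gd \<open>0 < D\<close> unfolding N_def flow_rhs_def b D_def[symmetric] g_def[symmetric] d_def[symmetric]
    by (simp add: powr_p field_simps)
  moreover have "K * E * d powr q < (2 * E1 + (K - 2) * E) * g powr q"
    using above p gd \<open>2 < K\<close>
    by (intro ratio_threshold_ineq) (simp_all add: K_def q_def g_def d_def E_def E1_def)
  ultimately have "0 < N / d\<^sup>2"
    using gd \<open>0 < D\<close> by simp
  moreover have "((\<lambda>s. a s 1 / a s 2) has_real_derivative N / d\<^sup>2) (at t)"
    using gd I12 t unfolding N_def g_def d_def
    by (auto intro!: derivative_eq_intros has_real_derivative_at simp: power2_eq_square)
  ultimately show ?thesis
    by blast
qed

lemma ratio_strict_mono_above:
  defines "c \<equiv> (2^m / (2^m - 2)) powr (1 / (p - 1))"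
  assumes m: "2 \<le> m" and p: "1 < p"
    and alt: "\<And>t. 0 \<le> t \<Longrightarrow> \<forall>k\<in>{1..2^m - 1}. a t k = a t (parity_rep k)"
    and initial_above: "c < a 0 1 / a 0 2"
  shows "strict_mono_on {0..} (\<lambda>t. a t 1 / a t 2)" and "\<forall>t\<ge>0. c < a t 1 / a t 2"
proof -
  have "(4::nat) \<le> 2^m"
    using power_increasing[OF m, of "2::nat"] by simp
  then have I12: "1 \<in> {1..2^m - 1::nat}" "2 \<in> {1..2^m - 1::nat}"
    by auto
  have "a t 2 \<noteq> 0" if "0 \<le> t" for t
    using component_pos[OF that I12(2)] by simp
  then have "continuous_on {0..} (\<lambda>t. a t 1 / a t 2)"
    by (intro continuous_on_divide component_continuous I12) auto
  note ratio_mono = strict_mono_on_if_DERIV_pos_above[OF this initial_above]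
  have "\<exists>y. ((\<lambda>s. a s 1 / a s 2) has_real_derivative y) (at t) \<and> 0 < y"
    if "0 < t" "c < a t 1 / a t 2" for t
    using that alt[of t] unfolding c_def by (intro ratio_has_pos_derivative m p) auto
  then show "strict_mono_on {0..} (\<lambda>t. a t 1 / a t 2)" "\<forall>t\<ge>0. c < a t 1 / a t 2"
    using ratio_mono by blast+
qed

end

theorem mainTheorem13:
  fixes m L :: nat and a :: "real \<Rightarrow> nat \<Rightarrow> real" and \<gamma>0 \<delta>0 :: real
  assumes hm: "m \<ge> 2" and hL: "L \<ge> 2"
    and ode: "\<And>t i. t \<ge> 0 \<Longrightarrow> i \<in> {1..2^m - 1} \<Longrightarrow>
      ((\<lambda>s. a s i) has_real_derivative
         (1 / D_coef m (a t)) * b_coef m (a t) i * (a t i) powr (2 * real L / (real L + 1)))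
       (at t within {0..})"
    and init: "\<And>i. i \<in> {1..2^m - 1} \<Longrightarrow> a 0 i = (if odd i then \<gamma>0 else \<delta>0)"
    and pos: "\<gamma>0 > 0" "\<delta>0 > 0"
    and ratio: "\<gamma>0 / \<delta>0 > (real (2^m) / (real (2^m) - 2)) powr ((real L + 1) / (real L - 1))"
  shows "\<exists>\<gamma> \<delta> :: real \<Rightarrow> real.
     (\<forall>t\<ge>0. \<forall>i\<in>{1..2^m - 1}. a t i = (if odd i then \<gamma> t else \<delta> t))
   \<and> strict_mono_on {0..} (\<lambda>t. \<gamma> t / \<delta> t)
   \<and> (\<forall>t\<ge>0. \<gamma> t / \<delta> t > (real (2^m) / (real (2^m) - 2)) powr ((real L + 1) / (real L - 1)))"
proof -
  define p where "p = 2 * real L / (real L + 1)"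
  interpret hadamard_flow m p a
    using ode init pos by unfold_locales (auto simp: flow_rhs_def p_def)
  have "1 < p" and exponent: "1 / (p - 1) = (real L + 1) / (real L - 1)"
    using hL by (simp_all add: p_def field_simps)
  have "a 0 1 = \<gamma>0" "a 0 2 = \<delta>0"
    using init power_increasing[OF hm, of "2::nat"] by auto
  moreover have "\<forall>k\<in>{1..2^m - 1}. a 0 k = a 0 (parity_rep k)"
    using init parity_rep_mem by (simp add: parity_rep_def)
  then have alt: "\<forall>k\<in>{1..2^m - 1}. a t k = a t (parity_rep k)" if "0 \<le> t" for t
    using alternating_preserved[OF less_imp_le[OF \<open>1 < p\<close>] _ that] by blast
  ultimately have mono: "strict_mono_on {0..} (\<lambda>t. a t 1 / a t 2)"
    and above: "\<forall>t\<ge>0. a t 1 / a t 2 > (real (2^m) / (real (2^m) - 2)) powr ((real L + 1) / (real L - 1))"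
    using ratio_strict_mono_above[OF hm \<open>1 < p\<close> alt] ratio by (simp_all add: exponent)
  have shape: "\<forall>t\<ge>0. \<forall>i\<in>{1..2^m - 1}. a t i = (if odd i then a t 1 else a t 2)"
    using alt by (metis parity_rep_def)
  show ?thesis
    by (rule exI[of _ "\<lambda>t. a t 1"], rule exI[of _ "\<lambda>t. a t 2"]) (intro conjI shape mono above)
qed

end
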